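(* Let $(A,B)\in\mathcal{AB}$ and let $\mu$ be a matching that is component-wise individually rational at $(A,B)$. Then $\mu$ is unambiguously efficient at $(A,B)$ if and only if there is no cycle of $\mu$ that is both component-wise individually rational at $(A,B)$ and Pareto-improving.
   Context: Setup. $I=\{1,\dots,n\}$ is a finite set of agents and $O$ a finite set of objects. Each agent $i$ is endowed with a nonempty set $\Omega_i\subseteq O$; the sets $\Omega_i$ are pairwise disjoint and $\bigcup_{i\in I}\Omega_i=O$. A matching is a map $\mu:I\to 2^O$ with $\mu(i)\cap\mu(j)=\emptyset$ for $i\neq j$ and $|\mu(i)|=|\Omega_i|$ for every $i$; $\mathcal M$ is the set of matchings. Agent $i$'s consumption set is $\mathcal X_i=\{X\subseteq O:|X|=|\Omega_i|\}$; a preference of $i$ is a complete, transitive, reflexive relation $R_i$ on $\mathcal X_i$ with strict part $P_i$. A marginal preference of $i$ is a weak order $\succsim_i$ on $O$. $R_i$ is responsive to $\succsim_i$ if for all $o,p\in O$ and all $Q\in\mathcal X_i$ with $o\in Q$, $p\notin Q$: $Q\mathrel{R_i}(Q\setminus\{o\})\cup\{p\}$ iff $o\succsim_i p$. Given a profile $R$, $\mu'$ Pareto-improves $\mu$ if $\mu'(i)\mathrel{R_i}\mu(i)$ for all $i$ and $\mu'(i)\mathrel{P_i}\mu(i)$ for some $i$; $\mu$ is Pareto-efficient if no matching Pareto-improves it. Given a profile $\succsim$ of marginal preferences, $\mu$ is unambiguously efficient if it is Pareto-efficient at every profile $R$ such that each $R_i$ is responsive to $\succsim_i$. The matching $\mu$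 is component-wise individually rational at $\succsim$ if for every $i\in I$ and every $\omega\in\Omega_i$, $|\{o\in\mu(i):o\succsim_i\omega\}|\ge|\{o\in\Omega_i:o\succsim_i\omega\}|$. Trichotomous profiles. $\mathcal{AB}_i$ is the set of pairs $(A_i,B_i)$ of disjoint subsets of $O$ with $\Omega_i\subseteq A_i\cup B_i$, and $\mathcal{AB}=\times_{i\in I}\mathcal{AB}_i$. A pair $(A_i,B_i)$ induces the marginal preference $\succsim_i$ in which all objects of $A_i$ are indifferent to each other and strictly preferred to all objects of $B_i$, which are indifferent to each other and strictly preferred to all objects of $O\setminus(A_i\cup B_i)$, which are indifferent to each other. Properties "at $(A,B)$" refer to the induced marginal profile. Cycles. Given a matching $\mu$, a cycle of $\mu$ is $C=(i_1,o_1,i_2,o_2,\dots,i_L,o_L)$ with distinct agents and distinct objects such that for each $l\in\{2,\dots,L\}$, $o_{l-1}\in\mu(i_l)$ and $o_l\notin\mu(i_l)$, and $o_L\in\mu(i_1)$. The matching $\mu+C$ is obtained from $\mu$ by replacing, for each $l\in\{2,\dots,L\}$, $o_{l-1}$ in $\mu(i_l)$ by $o_l$, and replacing $o_L$ in $\mu(i_1)$ by $o_1$. The cycle $C$ is component-wise individually rational at $(A,B)$ if $o_l\in A_{i_l}\cup B_{i_l}$ for every $l$. $C$ increases (resp. decreases) $i$'s welfare if $|(\mu+C)(i)\cap A_i|>|\mu(i)\cap A_i|$ (resp. $<$); $C$ is Pareto-improving if it increases some agent's welfare and decreases no agent's welfare. *)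

theory Defs
  imports Main
begin

definition economy :: "'i set \<Rightarrow> 'x set \<Rightarrow> ('i \<Rightarrow> 'x set) \<Rightarrow> bool" where
  "economy I Obj Om \<longleftrightarrow> finite I \<and> finite Obj \<and> (\<forall>i\<in>I. Om i \<noteq> {})
     \<and> (\<forall>i\<in>I. \<forall>j\<in>I. i \<noteq> j \<longrightarrow> Om i \<inter> Om j = {}) \<and> (\<Union>i\<in>I. Om i) = Obj"

definition matching :: "'i set \<Rightarrow> 'x set \<Rightarrow> ('i \<Rightarrow> 'x set) \<Rightarrow> ('i \<Rightarrow> 'x set) \<Rightarrow> bool" where
  "matching I Obj Om mu \<longleftrightarrow> (\<forall>i\<in>I. mu i \<subseteq> Obj)
     \<and> (\<forall>i\<in>I. \<forall>j\<in>I. i \<noteq> j \<longrightarrow> mu i \<inter> mu j = {})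
     \<and> (\<forall>i\<in>I. card (mu i) = card (Om i))"

definition consumption :: "'x set \<Rightarrow> nat \<Rightarrow> 'x set set" where
  "consumption Obj k = {X. X \<subseteq> Obj \<and> card X = k}"

definition preference_on :: "'x set set \<Rightarrow> ('x set \<Rightarrow> 'x set \<Rightarrow> bool) \<Rightarrow> bool" where
  "preference_on Xs R \<longleftrightarrow> (\<forall>X\<in>Xs. \<forall>Y\<in>Xs. R X Y \<or> R Y X) \<and> (\<forall>X\<in>Xs. R X X)
     \<and> (\<forall>X\<in>Xs. \<forall>Y\<in>Xs. \<forall>Z\<in>Xs. R X Y \<longrightarrow> R Y Z \<longrightarrow> R X Z)"

definition strict :: "('a \<Rightarrow> 'a \<Rightarrow> bool) \<Rightarrow> 'a \<Rightarrow> 'a \<Rightarrow> bool" where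
  "strict R X Y \<longleftrightarrow> R X Y \<and> \<not> R Y X"

definition responsive :: "'x set \<Rightarrow> 'x set set \<Rightarrow> ('x set \<Rightarrow> 'x set \<Rightarrow> bool) \<Rightarrow> ('x \<Rightarrow> 'x \<Rightarrow> bool) \<Rightarrow> bool" where
  "responsive Obj Xs R mp \<longleftrightarrow> (\<forall>x\<in>Obj. \<forall>y\<in>Obj. \<forall>Q\<in>Xs. x \<in> Q \<longrightarrow> y \<notin> Q \<longrightarrow>
       (R Q ((Q - {x}) \<union> {y}) \<longleftrightarrow> mp x y))"

definition pareto_improves ::
  "'i set \<Rightarrow> ('i \<Rightarrow> 'x set \<Rightarrow> 'x set \<Rightarrow> bool) \<Rightarrow> ('i \<Rightarrow> 'x set) \<Rightarrow> ('i \<Rightarrow> 'x set) \<Rightarrow> bool" where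
  "pareto_improves I R mu' mu \<longleftrightarrow> (\<forall>i\<in>I. R i (mu' i) (mu i)) \<and> (\<exists>i\<in>I. strict (R i) (mu' i) (mu i))"

definition pareto_efficient ::
  "'i set \<Rightarrow> 'x set \<Rightarrow> ('i \<Rightarrow> 'x set) \<Rightarrow> ('i \<Rightarrow> 'x set \<Rightarrow> 'x set \<Rightarrow> bool) \<Rightarrow> ('i \<Rightarrow> 'x set) \<Rightarrow> bool" where
  "pareto_efficient I Obj Om R mu \<longleftrightarrow> \<not> (\<exists>mu'. matching I Obj Om mu' \<and> pareto_improves I R mu' mu)"

definition unambiguously_efficient ::
  "'i set \<Rightarrow> 'x set \<Rightarrow> ('i \<Rightarrow> 'x set) \<Rightarrow> ('i \<Rightarrow> 'x \<Rightarrow> 'x \<Rightarrow> bool) \<Rightarrow> ('i \<Rightarrow> 'x set) \<Rightarrow> bool" where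
  "unambiguously_efficient I Obj Om mp mu \<longleftrightarrow>
     (\<forall>R. (\<forall>i\<in>I. preference_on (consumption Obj (card (Om i))) (R i)
               \<and> responsive Obj (consumption Obj (card (Om i))) (R i) (mp i))
          \<longrightarrow> pareto_efficient I Obj Om R mu)"

definition cw_IR ::
  "'i set \<Rightarrow> ('i \<Rightarrow> 'x set) \<Rightarrow> ('i \<Rightarrow> 'x \<Rightarrow> 'x \<Rightarrow> bool) \<Rightarrow> ('i \<Rightarrow> 'x set) \<Rightarrow> bool" where
  "cw_IR I Om mp mu \<longleftrightarrow> (\<forall>i\<in>I. \<forall>w\<in>Om i.
      card {x\<in>mu i. mp i x w} \<ge> card {x\<in>Om i. mp i x w})"

definition AB_profile :: "'i set \<Rightarrow> 'x set \<Rightarrow> ('i \<Rightarrow> 'x set) \<Rightarrow> ('i \<Rightarrow> 'x set) \<Rightarrow> ('i \<Rightarrow> 'x set) \<Rightarrow> bool" where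
  "AB_profile I Obj Om A B \<longleftrightarrow> (\<forall>i\<in>I. A i \<subseteq> Obj \<and> B i \<subseteq> Obj \<and> A i \<inter> B i = {} \<and> Om i \<subseteq> A i \<union> B i)"

definition tier :: "'x set \<Rightarrow> 'x set \<Rightarrow> 'x \<Rightarrow> nat" where
  "tier Ai Bi x = (if x \<in> Ai then 2 else if x \<in> Bi then 1 else 0)"

definition induced :: "('i \<Rightarrow> 'x set) \<Rightarrow> ('i \<Rightarrow> 'x set) \<Rightarrow> 'i \<Rightarrow> 'x \<Rightarrow> 'x \<Rightarrow> bool" where
  "induced A B i x y \<longleftrightarrow> tier (A i) (B i) y \<le> tier (A i) (B i) x"

text \<open>Cycles.  A cycle (i_1,o_1,...,i_L,o_L) is the nonempty list
  [(i_1,o_1),...,(i_L,o_L)] (0-indexed here); the predecessor of position k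
  is (k + L - 1) mod L.\<close>
definition cyc_prev :: "nat \<Rightarrow> nat \<Rightarrow> nat" where
  "cyc_prev L k = (k + L - 1) mod L"

definition is_cycle :: "'i set \<Rightarrow> ('i \<Rightarrow> 'x set) \<Rightarrow> ('i \<times> 'x) list \<Rightarrow> bool" where
  "is_cycle I mu C \<longleftrightarrow> C \<noteq> [] \<and> distinct (map fst C) \<and> distinct (map snd C)
     \<and> (\<forall>k<length C. fst (C ! k) \<in> I)
     \<and> (\<forall>k. 1 \<le> k \<and> k < length C \<longrightarrow>
           snd (C ! (k - 1)) \<in> mu (fst (C ! k)) \<and> snd (C ! k) \<notin> mu (fst (C ! k)))
     \<and> snd (C ! (length C - 1)) \<in> mu (fst (C ! 0))"

definition apply_cycle :: "('i \<Rightarrow> 'x set) \<Rightarrow> ('i \<times> 'x) list \<Rightarrow> 'i \<Rightarrow> 'x set" where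
  "apply_cycle mu C i =
     (if \<exists>k<length C. fst (C ! k) = i then
        (let k = (THE k. k < length C \<and> fst (C ! k) = i) in
          (mu i - {snd (C ! cyc_prev (length C) k)}) \<union> {snd (C ! k)})
      else mu i)"

definition cycle_cw_IR :: "('i \<Rightarrow> 'x set) \<Rightarrow> ('i \<Rightarrow> 'x set) \<Rightarrow> ('i \<times> 'x) list \<Rightarrow> bool" where
  "cycle_cw_IR A B C \<longleftrightarrow> (\<forall>k<length C. snd (C ! k) \<in> A (fst (C ! k)) \<union> B (fst (C ! k)))"

definition cycle_pareto_improving ::
  "'i set \<Rightarrow> ('i \<Rightarrow> 'x set) \<Rightarrow> ('i \<Rightarrow> 'x set) \<Rightarrow> ('i \<times> 'x) list \<Rightarrow> bool" where
  "cycle_pareto_improving I A mu C \<longleftrightarrow>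
     (\<exists>i\<in>I. card (apply_cycle mu C i \<inter> A i) > card (mu i \<inter> A i))
     \<and> (\<forall>i\<in>I. \<not> card (apply_cycle mu C i \<inter> A i) < card (mu i \<inter> A i))"

end

(*
  If a component-wise individually rational cycle is Pareto-improving, executing it raises,
  weakly for every agent and strictly for one, the additive utility that counts an object of A i
  twice and an object of B i once; this utility is responsive to the trichotomous preference,
  so mu is not unambiguously efficient.

  Conversely, let mu' Pareto-improve mu at some responsive profile. Responsive preferences
  respect first-order stochastic dominance, and mu i lies inside A i \<union> B i by component-wise
  individual rationality; hence no agent holds fewer A-objects under mu', agents holding equally
  many stay inside A i \<union> B i, and some agent holds more. In the exchange graph, with an edge
  from g to r whenever the agent giving up g receives the acceptable object r, and r is in A
  if g is, a counting argument over a set of objects closed under edges shows that some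
  improving edge (g outside A, r inside A) lies on a closed walk. Shortcutting the walk at
  repeated agents keeps an improving edge and yields the required cycle.
*)

theory Submission
  imports Defs "HOL-Library.Disjoint_Sets"
begin

definition path_edges :: "'a list \<Rightarrow> ('a \<times> 'a) set" where
  "path_edges xs = set (zip (butlast xs) (tl xs))"

definition cycle_edges :: "'a list \<Rightarrow> ('a \<times> 'a) set" where
  "cycle_edges xs = set (zip xs (rotate1 xs))"

lemma zip_snoc_tl:
  assumes "xs \<noteq> []"
  shows "zip xs (tl xs @ [y]) = zip (butlast xs) (tl xs) @ [(last xs, y)]"
proof -
  have "zip xs (tl xs @ [y]) = zip (butlast xs @ [last xs]) (tl xs @ [y])"
    using assms by simp
  also have "\<dots> = zip (butlast xs) (tl xs) @ zip [last xs] [y]"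
    using assms by (intro zip_append) (cases xs, auto)
  finally show ?thesis by simp
qed

lemma path_edges_snoc: "xs \<noteq> [] \<Longrightarrow> path_edges (xs @ [y]) = insert (last xs, y) (path_edges xs)"
  unfolding path_edges_def using zip_snoc_tl[of xs y] by (cases xs) auto

lemma cycle_edges_eq_path_edges:
  "xs \<noteq> [] \<Longrightarrow> cycle_edges xs = insert (last xs, hd xs) (path_edges xs)"
  unfolding cycle_edges_def path_edges_def
  by (cases xs) (auto simp: zip_snoc_tl[of "_ # _", simplified])

lemma cycle_edges_append:
  assumes "xs \<noteq> []" "ys \<noteq> []"
  shows "cycle_edges (xs @ ys) =
    path_edges xs \<union> path_edges ys \<union> {(last xs, hd ys), (last ys, hd xs)}"
proof -
  have rot: "rotate1 (xs @ ys) = (tl xs @ [hd ys]) @ (tl ys @ [hd xs])"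
    using assms by (cases xs; cases ys) auto
  have "zip (xs @ ys) (rotate1 (xs @ ys)) = zip xs (tl xs @ [hd ys]) @ zip ys (tl ys @ [hd xs])"
    unfolding rot by (rule zip_append) (use assms in \<open>cases xs, auto\<close>)
  then show ?thesis
    unfolding cycle_edges_def path_edges_def using assms by (simp add: zip_snoc_tl)
qed

lemma cycle_edges_rotate: "cycle_edges (xs @ ys) = cycle_edges (ys @ xs)"
  by (cases "xs = [] \<or> ys = []") (auto simp: cycle_edges_append Un_ac insert_commute)

lemma cycle_edges_conv_nth:
  "cycle_edges xs = (\<lambda>k. (xs ! k, xs ! (Suc k mod length xs))) ` {..<length xs}"
  unfolding cycle_edges_def set_zip by (auto simp: nth_rotate1)

lemma rtrancl_imp_path:
  assumes "(a, b) \<in> R\<^sup>*"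
  shows "\<exists>xs. xs \<noteq> [] \<and> hd xs = a \<and> last xs = b \<and> path_edges xs \<subseteq> R \<and> set xs \<subseteq> insert a (Range R)"
  using assms
proof (induction rule: rtrancl_induct)
  case base
  show ?case by (intro exI[of _ "[a]"]) (simp add: path_edges_def)
next
  case (step y z)
  then obtain xs where "xs \<noteq> []" "hd xs = a" "last xs = y" "path_edges xs \<subseteq> R"
      "set xs \<subseteq> insert a (Range R)"
    by blast
  with step.hyps(2) show ?case
    by (intro exI[of _ "xs @ [z]"]) (auto simp: path_edges_snoc)
qed

lemma not_distinct_map_decomp:
  assumes "\<not> distinct (map f xs)"
  obtains us a vs b ws where "xs = us @ a # vs @ b # ws" "f a = f b"
proof -
  obtain as y bs cs where "map f xs = as @ [y] @ bs @ [y] @ cs"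
    using not_distinct_decomp[OF assms] by blast
  then obtain us r where "xs = us @ r" "map f r = y # bs @ y # cs"
    by (auto simp: map_eq_append_conv)
  moreover from this(2) obtain a vs r' where "r = a # vs @ r'" "f a = y" "map f r' = y # cs"
    by (auto simp: map_eq_Cons_conv map_eq_append_conv)
  moreover from this(3) obtain b ws where "r' = b # ws" "f b = y"
    by (auto simp: map_eq_Cons_conv)
  ultimately show thesis using that by simp
qed

text \<open>An edge \<open>(g, r)\<close> of an exchange walk means that the owner of \<open>g\<close> gives up \<open>g\<close> and
  receives \<open>r\<close> in return.\<close>

definition acceptable_swap :: "('i \<Rightarrow> 'x set) \<Rightarrow> ('i \<Rightarrow> 'x set) \<Rightarrow> ('x \<Rightarrow> 'i) \<Rightarrow> 'x \<times> 'x \<Rightarrow> bool" where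
  "acceptable_swap A B own e \<longleftrightarrow>
     snd e \<in> A (own (fst e)) \<union> B (own (fst e)) \<and> (fst e \<in> A (own (fst e)) \<longrightarrow> snd e \<in> A (own (fst e)))"

definition improving_swap :: "('i \<Rightarrow> 'x set) \<Rightarrow> ('x \<Rightarrow> 'i) \<Rightarrow> 'x \<times> 'x \<Rightarrow> bool" where
  "improving_swap A own e \<longleftrightarrow> snd e \<in> A (own (fst e)) \<and> fst e \<notin> A (own (fst e))"

definition improving_swaps ::
  "('i \<Rightarrow> 'x set) \<Rightarrow> ('i \<Rightarrow> 'x set) \<Rightarrow> ('x \<Rightarrow> 'i) \<Rightarrow> ('x \<times> 'x) set \<Rightarrow> bool" where
  "improving_swaps A B own E \<longleftrightarrow> (\<forall>e\<in>E. acceptable_swap A B own e) \<and> (\<exists>e\<in>E. improving_swap A own e)"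

lemma improving_swaps_rewire:
  assumes "improving_swaps A B own (E \<union> F \<union> {(b, w), (a, v)})" and "own a = own b"
  shows "improving_swaps A B own (insert (b, v) E) \<or> improving_swaps A B own (insert (a, w) F)"
proof -
  have acc: "acceptable_swap A B own (b, w)" "acceptable_swap A B own (a, v)"
    using assms(1) unfolding improving_swaps_def by auto
  have "acceptable_swap A B own (b, v) \<or> improving_swap A own (a, w) \<and> acceptable_swap A B own (a, w)"
    "acceptable_swap A B own (a, w) \<or> improving_swap A own (b, v) \<and> acceptable_swap A B own (b, v)"
    "improving_swap A own (b, w) \<or> improving_swap A own (a, v) \<Longrightarrow>
       improving_swap A own (b, v) \<or> improving_swap A own (a, w)"
    using acc assms(2) unfolding acceptable_swap_def improving_swap_def by auto
  then show ?thesis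
    using assms(1) unfolding improving_swaps_def by blast
qed

definition improving_closed_walk ::
  "('i \<Rightarrow> 'x set) \<Rightarrow> ('i \<Rightarrow> 'x set) \<Rightarrow> ('x \<Rightarrow> 'i) \<Rightarrow> 'x list \<Rightarrow> bool" where
  "improving_closed_walk A B own xs \<longleftrightarrow> xs \<noteq> [] \<and> improving_swaps A B own (cycle_edges xs)"

text \<open>Cutting a closed walk at two objects of the same owner and exchanging what the owner
  receives for them splits it into two shorter closed walks, one of which is still improving.\<close>

lemma improving_closed_walk_shortcut:
  "improving_closed_walk A B own xs \<Longrightarrow>
   \<exists>ys. improving_closed_walk A B own ys \<and> distinct (map own ys) \<and> set ys \<subseteq> set xs"
proof (induction xs rule: length_induct)
  case (1 xs)
  show ?case
  proof (cases "distinct (map own xs)")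
    case True
    then show ?thesis using "1.prems" by blast
  next
    case False
    then obtain us a vs b ws where xs: "xs = us @ a # vs @ b # ws" and ab: "own a = own b"
      by (rule not_distinct_map_decomp)
    define V where "V = vs @ [b]"
    define W where "W = ws @ us @ [a]"
    have ne: "V \<noteq> []" "W \<noteq> []" and last: "last V = b" "last W = a"
      by (simp_all add: V_def W_def)
    have "cycle_edges xs = cycle_edges (V @ W)"
      using cycle_edges_rotate[of "us @ [a]" "vs @ [b] @ ws"] by (simp add: xs V_def W_def)
    then have "improving_swaps A B own (path_edges V \<union> path_edges W \<union> {(b, hd W), (a, hd V)})"
      using "1.prems" cycle_edges_append[OF ne] last
      unfolding improving_closed_walk_def by (simp add: insert_commute)
    then have "improving_closed_walk A B own V \<or> improving_closed_walk A B own W"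
      using improving_swaps_rewire[where own = own and a = a and b = b, OF _ ab] ne last
      unfolding improving_closed_walk_def by (simp add: cycle_edges_eq_path_edges)
    moreover have "length V < length xs" "length W < length xs" "set V \<subseteq> set xs" "set W \<subseteq> set xs"
      by (auto simp: V_def W_def xs)
    ultimately show ?thesis using "1.IH" by (meson order_trans)
  qed
qed

abbreviation cycle_agent :: "('i \<times> 'x) list \<Rightarrow> nat \<Rightarrow> 'i" where
  "cycle_agent C k \<equiv> fst (C ! k)"

abbreviation cycle_receives :: "('i \<times> 'x) list \<Rightarrow> nat \<Rightarrow> 'x" where
  "cycle_receives C k \<equiv> snd (C ! k)"

abbreviation cycle_gives :: "('i \<times> 'x) list \<Rightarrow> nat \<Rightarrow> 'x" where
  "cycle_gives C k \<equiv> snd (C ! cyc_prev (length C) k)"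

lemma cyc_prev_less: "k < L \<Longrightarrow> cyc_prev L k < L"
  unfolding cyc_prev_def by simp

lemma Suc_mod_less: "k < L \<Longrightarrow> Suc k mod L < (L::nat)"
  by simp

lemma Suc_mod_eq_iff_cyc_prev:
  assumes "m < L" "k < L"
  shows "Suc m mod L = k \<longleftrightarrow> m = cyc_prev L k"
proof (cases k)
  case 0
  then show ?thesis using assms unfolding cyc_prev_def by (cases "Suc m = L") auto
next
  case (Suc j)
  then show ?thesis using assms unfolding cyc_prev_def by (cases "Suc m = L") auto
qed

lemma is_cycle_agent_in: "is_cycle I mu C \<Longrightarrow> k < length C \<Longrightarrow> cycle_agent C k \<in> I"
  unfolding is_cycle_def by blast

lemma is_cycle_gives_mem:
  assumes "is_cycle I mu C" "k < length C"
  shows "cycle_gives C k \<in> mu (cycle_agent C k)"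
proof (cases k)
  case 0
  then show ?thesis using assms unfolding is_cycle_def cyc_prev_def by simp
next
  case (Suc j)
  then have "cyc_prev (length C) k = k - 1" using assms(2) unfolding cyc_prev_def by simp
  then show ?thesis using assms Suc unfolding is_cycle_def by auto
qed

lemma is_cycle_receives_mem_next:
  assumes "is_cycle I mu C" "k < length C"
  shows "cycle_receives C k \<in> mu (cycle_agent C (Suc k mod length C))"
proof -
  have "Suc k mod length C < length C" using Suc_mod_less[OF assms(2)] .
  then show ?thesis
    using is_cycle_gives_mem[OF assms(1)] Suc_mod_eq_iff_cyc_prev[OF assms(2)] by metis
qed

lemma is_cycle_agent_inj:
  "is_cycle I mu C \<Longrightarrow> k < length C \<Longrightarrow> m < length C \<Longrightarrow> cycle_agent C k = cycle_agent C m \<Longrightarrow> k = m"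
  unfolding is_cycle_def by (metis distinct_conv_nth length_map nth_map)

lemma is_cycle_receives_inj:
  "is_cycle I mu C \<Longrightarrow> k < length C \<Longrightarrow> m < length C \<Longrightarrow> cycle_receives C k = cycle_receives C m \<Longrightarrow> k = m"
  unfolding is_cycle_def by (metis distinct_conv_nth length_map nth_map)

lemma is_cycle_owner_of_receives:
  assumes "is_cycle I mu C" "disjoint_family_on mu I" "m < length C" "i \<in> I"
    and "cycle_receives C m \<in> mu i"
  shows "i = cycle_agent C (Suc m mod length C)"
proof -
  have "Suc m mod length C < length C" using Suc_mod_less[OF assms(3)] .
  then show ?thesis
    using is_cycle_receives_mem_next[OF assms(1,3)] is_cycle_agent_in[OF assms(1)] assms(2,4,5)
    unfolding disjoint_family_on_def by blast
qed

lemma is_cycle_receives_not_mem: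
  assumes "is_cycle I mu C" "disjoint_family_on mu I" "2 \<le> length C" "k < length C"
  shows "cycle_receives C k \<notin> mu (cycle_agent C k)"
proof
  assume "cycle_receives C k \<in> mu (cycle_agent C k)"
  then have "cycle_agent C k = cycle_agent C (Suc k mod length C)"
    using is_cycle_owner_of_receives[OF assms(1,2,4) is_cycle_agent_in[OF assms(1,4)]] by blast
  moreover have "Suc k mod length C < length C" "Suc k mod length C \<noteq> k"
    using assms(3,4) by (auto simp: mod_Suc)
  ultimately show False using is_cycle_agent_inj[OF assms(1,4)] by metis
qed

lemma apply_cycle_nth:
  assumes "is_cycle I mu C" "k < length C"
  shows "apply_cycle mu C (cycle_agent C k) = insert (cycle_receives C k) (mu (cycle_agent C k) - {cycle_gives C k})"
proof -
  have "(THE m. m < length C \<and> cycle_agent C m = cycle_agent C k) = k"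
    using is_cycle_agent_inj[OF assms(1) _ assms(2)] assms(2) by blast
  then show ?thesis unfolding apply_cycle_def using assms(2) by auto
qed

lemma apply_cycle_outside: "i \<notin> fst ` set C \<Longrightarrow> apply_cycle mu C i = mu i"
  unfolding apply_cycle_def by (metis image_eqI nth_mem)

lemma apply_cycle_eq:
  assumes "is_cycle I mu C" "disjoint_family_on mu I" "2 \<le> length C" "i \<in> I"
  shows "apply_cycle mu C i =
    (mu i - snd ` set C) \<union> {cycle_receives C k | k. k < length C \<and> cycle_agent C k = i}"
proof (cases "i \<in> fst ` set C")
  case False
  have "cycle_receives C m \<notin> mu i" if "m < length C" for m
    using is_cycle_owner_of_receives[OF assms(1,2) that assms(4)] False
      Suc_mod_less[OF that] by (metis image_eqI nth_mem)
  then have "mu i \<inter> snd ` set C = {}" by (force simp: in_set_conv_nth)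
  moreover have "\<not> (\<exists>k<length C. cycle_agent C k = i)" using False by (metis image_eqI nth_mem)
  ultimately show ?thesis using apply_cycle_outside[OF False] by auto
next
  case True
  then obtain k where k: "k < length C" "i = cycle_agent C k" by (auto simp: in_set_conv_nth)
  have "mu i \<inter> snd ` set C = {cycle_gives C k}"
  proof -
    have "cycle_receives C m = cycle_gives C k" if "cycle_receives C m \<in> mu i" "m < length C" for m
    proof -
      have "Suc m mod length C = k"
        using is_cycle_owner_of_receives[OF assms(1,2) \<open>m < length C\<close> assms(4)] that k
          is_cycle_agent_inj[OF assms(1)] k(1) Suc_mod_less by metis
      then show ?thesis using Suc_mod_eq_iff_cyc_prev[OF \<open>m < length C\<close> k(1)] that by simp
    qed
    moreover have "cycle_gives C k \<in> mu i \<inter> snd ` set C"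
      using is_cycle_gives_mem[OF assms(1) k(1)] k cyc_prev_less[OF k(1)] by (auto simp: image_iff)
    ultimately show ?thesis unfolding set_conv_nth by blast
  qed
  moreover have "{cycle_receives C m | m. m < length C \<and> cycle_agent C m = i} = {cycle_receives C k}"
    using is_cycle_agent_inj[OF assms(1) _ k(1)] k by auto
  moreover have "cycle_receives C k \<notin> mu i"
    using is_cycle_receives_not_mem[OF assms(1-3) k(1)] k(2) by simp
  ultimately show ?thesis using apply_cycle_nth[OF assms(1) k(1)] k(2) by auto
qed

lemma card_exchange: "p \<in> M \<Longrightarrow> q \<notin> M \<Longrightarrow> card (insert q (M - {p})) = card M"
  by (cases "finite M") (auto simp: card_insert_disjoint card_Suc_Diff1 simp del: card_Diff_insert)

lemma sum_exchange:
  fixes f :: "'a \<Rightarrow> 'b::comm_monoid_add"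
  assumes "finite M" "p \<in> M" "q \<notin> M"
  shows "sum f (insert q (M - {p})) + f p = sum f M + f q"
  using assms by (simp add: sum.remove[of M p f] add_ac)

lemma card_Int_exchange:
  assumes "finite M" "p \<in> M" "q \<notin> M"
  shows "card (insert q (M - {p}) \<inter> S) + of_bool (p \<in> S) = card (M \<inter> S) + of_bool (q \<in> S)"
proof -
  have "finite (insert q (M - {p}))" using assms(1) by simp
  then show ?thesis
    using sum_exchange[OF assms, of "\<lambda>x. of_bool (x \<in> S) :: nat"]
    unfolding sum_of_bool_eq[OF assms(1)] sum_of_bool_eq[OF \<open>finite (insert q (M - {p}))\<close>] by simp
qed

lemma matching_disjoint_family: "matching I Obj Om mu \<Longrightarrow> disjoint_family_on mu I"
  unfolding matching_def disjoint_family_on_def by blast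

lemma matching_apply_cycle:
  assumes mu: "matching I Obj Om mu" and C: "is_cycle I mu C" "2 \<le> length C"
  shows "matching I Obj Om (apply_cycle mu C)"
proof -
  have disj: "disjoint_family_on mu I" using matching_disjoint_family[OF mu] .
  define recv where "recv i = {cycle_receives C k | k. k < length C \<and> cycle_agent C k = i}" for i
  have eq: "apply_cycle mu C i = (mu i - snd ` set C) \<union> recv i" if "i \<in> I" for i
    unfolding recv_def using apply_cycle_eq[OF C(1) disj C(2) that] .
  have "recv i \<subseteq> Obj" for i
    using is_cycle_receives_mem_next[OF C(1)] is_cycle_agent_in[OF C(1)] Suc_mod_less mu
    unfolding recv_def matching_def by blast
  then have sub: "\<forall>i\<in>I. apply_cycle mu C i \<subseteq> Obj"
    using eq mu unfolding matching_def by blast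
  have recv_sub: "recv i \<subseteq> snd ` set C" for i unfolding recv_def by auto
  have recv_disj: "recv i \<inter> recv j = {}" if "i \<noteq> j" for i j
    using is_cycle_receives_inj[OF C(1)] that unfolding recv_def by blast
  have dis: "apply_cycle mu C i \<inter> apply_cycle mu C j = {}" if "i \<in> I" "j \<in> I" "i \<noteq> j" for i j
  proof -
    have "mu i \<inter> mu j = {}" using disj that unfolding disjoint_family_on_def by blast
    then show ?thesis
      unfolding eq[OF that(1)] eq[OF that(2)] using recv_sub[of i] recv_sub[of j] recv_disj[OF that(3)]
      by blast
  qed
  have "card (apply_cycle mu C i) = card (mu i)" for i
  proof (cases "i \<in> fst ` set C")
    case True
    then obtain k where "k < length C" "i = cycle_agent C k" by (auto simp: in_set_conv_nth)
    then show ?thesis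
      using apply_cycle_nth[OF C(1)] is_cycle_gives_mem[OF C(1)]
        is_cycle_receives_not_mem[OF C(1) disj C(2)] card_exchange by metis
  qed (simp add: apply_cycle_outside)
  then show ?thesis using sub dis mu unfolding matching_def by auto
qed

lemma cycle_pareto_improving_iff:
  assumes C: "is_cycle I mu C" "2 \<le> length C"
    and disj: "disjoint_family_on mu I" and fin: "\<forall>i\<in>I. finite (mu i)"
  shows "cycle_pareto_improving I A mu C \<longleftrightarrow>
    (\<exists>k<length C. cycle_receives C k \<in> A (cycle_agent C k) \<and> cycle_gives C k \<notin> A (cycle_agent C k)) \<and>
    (\<forall>k<length C. cycle_gives C k \<in> A (cycle_agent C k) \<longrightarrow> cycle_receives C k \<in> A (cycle_agent C k))"
proof -
  define old where "old i = card (mu i \<inter> A i)" for i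
  define new where "new i = card (apply_cycle mu C i \<inter> A i)" for i
  have on_cycle: "i \<in> fst ` set C \<longleftrightarrow> (\<exists>k<length C. i = cycle_agent C k)" for i
    by (force simp: in_set_conv_nth)
  have off_cycle: "new i = old i" if "i \<notin> fst ` set C" for i
    unfolding new_def old_def using apply_cycle_outside[OF that] by simp
  have change: "new (cycle_agent C k) + of_bool (cycle_gives C k \<in> A (cycle_agent C k)) =
      old (cycle_agent C k) + of_bool (cycle_receives C k \<in> A (cycle_agent C k))" if "k < length C" for k
    unfolding new_def old_def apply_cycle_nth[OF C(1) that]
    using fin is_cycle_agent_in[OF C(1) that] is_cycle_gives_mem[OF C(1) that]
      is_cycle_receives_not_mem[OF C(1) disj C(2) that] by (intro card_Int_exchange) auto
  have gain: "old (cycle_agent C k) < new (cycle_agent C k) \<longleftrightarrow>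
      cycle_receives C k \<in> A (cycle_agent C k) \<and> cycle_gives C k \<notin> A (cycle_agent C k)"
    and loss: "new (cycle_agent C k) < old (cycle_agent C k) \<longleftrightarrow>
      cycle_gives C k \<in> A (cycle_agent C k) \<and> cycle_receives C k \<notin> A (cycle_agent C k)"
    if "k < length C" for k
    using change[OF that] by (auto simp: of_bool_def split: if_splits)
  have "(\<exists>i\<in>I. old i < new i) \<longleftrightarrow> (\<exists>k<length C. old (cycle_agent C k) < new (cycle_agent C k))"
    using off_cycle on_cycle is_cycle_agent_in[OF C(1)] by (metis less_irrefl)
  moreover have "(\<forall>i\<in>I. \<not> new i < old i) \<longleftrightarrow> (\<forall>k<length C. \<not> new (cycle_agent C k) < old (cycle_agent C k))"
    using off_cycle on_cycle is_cycle_agent_in[OF C(1)] by (metis less_irrefl)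
  ultimately show ?thesis using gain loss
    unfolding cycle_pareto_improving_def old_def[symmetric] new_def[symmetric] by blast
qed

lemma cycle_pareto_improving_length:
  assumes "is_cycle I mu C" "cycle_pareto_improving I A mu C"
  shows "2 \<le> length C"
proof (rule ccontr)
  assume "\<not> 2 \<le> length C"
  moreover have "0 < length C" using assms(1) unfolding is_cycle_def by simp
  ultimately have "length C = 1" by linarith
  then have "apply_cycle mu C (cycle_agent C 0) = mu (cycle_agent C 0)"
    using apply_cycle_nth[OF assms(1), of 0] is_cycle_gives_mem[OF assms(1), of 0]
    unfolding cyc_prev_def by auto
  moreover have "apply_cycle mu C i = mu i" if "i \<noteq> cycle_agent C 0" for i
  proof (rule apply_cycle_outside)
    show "i \<notin> fst ` set C" using that \<open>length C = 1\<close> by (cases C) auto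
  qed
  ultimately have "apply_cycle mu C = mu" by (metis ext)
  then show False using assms(2) unfolding cycle_pareto_improving_def by simp
qed

lemma consumption_finite: "finite Obj \<Longrightarrow> X \<in> consumption Obj k \<Longrightarrow> finite X"
  unfolding consumption_def by (auto intro: finite_subset)

lemma responsiveD:
  "responsive Obj Xs R mp \<Longrightarrow> x \<in> Obj \<Longrightarrow> y \<in> Obj \<Longrightarrow> Q \<in> Xs \<Longrightarrow> x \<in> Q \<Longrightarrow> y \<notin> Q \<Longrightarrow>
    R Q (insert y (Q - {x})) \<longleftrightarrow> mp x y"
  unfolding responsive_def by simp

lemma preference_on_trans:
  "preference_on Xs R \<Longrightarrow> X \<in> Xs \<Longrightarrow> Y \<in> Xs \<Longrightarrow> Z \<in> Xs \<Longrightarrow> R X Y \<Longrightarrow> R Y Z \<Longrightarrow> R X Z"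
  unfolding preference_on_def by blast

definition additive_pref :: "('x \<Rightarrow> nat) \<Rightarrow> 'x set \<Rightarrow> 'x set \<Rightarrow> bool" where
  "additive_pref t X Y \<longleftrightarrow> sum t Y \<le> sum t X"

lemma preference_on_additive_pref: "preference_on Xs (additive_pref t)"
  unfolding preference_on_def additive_pref_def by auto

lemma responsive_additive_pref:
  assumes "finite Obj"
  shows "responsive Obj (consumption Obj k) (additive_pref t) (\<lambda>x y. t y \<le> t x)"
  unfolding responsive_def
proof (intro ballI impI)
  fix x y Q assume "Q \<in> consumption Obj k" "x \<in> Q" "y \<notin> Q"
  moreover have "finite Q" using consumption_finite assms \<open>Q \<in> consumption Obj k\<close> .
  ultimately have "sum t (Q - {x} \<union> {y}) + t x = sum t Q + t y"
    using sum_exchange[of Q x y t] by simp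
  then show "additive_pref t Q (Q - {x} \<union> {y}) \<longleftrightarrow> t y \<le> t x"
    unfolding additive_pref_def by linarith
qed

lemma induced_eq: "induced A B i = (\<lambda>x y. tier (A i) (B i) y \<le> tier (A i) (B i) x)"
  unfolding induced_def by (intro ext) simp

lemma tier_le_tier: "q \<in> Ai \<union> Bi \<Longrightarrow> (p \<in> Ai \<longrightarrow> q \<in> Ai) \<Longrightarrow> tier Ai Bi p \<le> tier Ai Bi q"
  unfolding tier_def by auto

lemma tier_less_tier: "q \<in> Ai \<Longrightarrow> p \<notin> Ai \<Longrightarrow> tier Ai Bi p < tier Ai Bi q"
  unfolding tier_def by auto

theorem improving_cycle_not_unambiguously_efficient:
  assumes econ: "economy I Obj Om" and mu: "matching I Obj Om mu"
    and C: "is_cycle I mu C" "cycle_cw_IR A B C" "cycle_pareto_improving I A mu C"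
  shows "\<not> unambiguously_efficient I Obj Om (induced A B) mu"
proof -
  have fin_Obj: "finite Obj" using econ unfolding economy_def by blast
  have disj: "disjoint_family_on mu I" using matching_disjoint_family[OF mu] .
  have fin: "\<forall>i\<in>I. finite (mu i)" using mu fin_Obj unfolding matching_def by (meson finite_subset)
  have len: "2 \<le> length C" using cycle_pareto_improving_length[OF C(1,3)] .
  note improving = cycle_pareto_improving_iff[OF C(1) len disj fin, THEN iffD1, OF C(3)]
  define t where "t i = tier (A i) (B i)" for i
  define R where "R i = additive_pref (t i)" for i
  define mu' where "mu' = apply_cycle mu C"
  have change: "sum (t (cycle_agent C k)) (mu' (cycle_agent C k)) + t (cycle_agent C k) (cycle_gives C k)
      = sum (t (cycle_agent C k)) (mu (cycle_agent C k)) + t (cycle_agent C k) (cycle_receives C k)"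
    if "k < length C" for k
    unfolding mu'_def apply_cycle_nth[OF C(1) that]
    by (rule sum_exchange) (use fin is_cycle_agent_in[OF C(1) that] is_cycle_gives_mem[OF C(1) that]
        is_cycle_receives_not_mem[OF C(1) disj len that] in auto)
  have weak: "R i (mu' i) (mu i)" if "i \<in> I" for i
  proof (cases "i \<in> fst ` set C")
    case True
    then obtain k where k: "k < length C" "i = cycle_agent C k" by (auto simp: in_set_conv_nth)
    have "t (cycle_agent C k) (cycle_gives C k) \<le> t (cycle_agent C k) (cycle_receives C k)"
      unfolding t_def using C(2) improving k(1) by (intro tier_le_tier) (auto simp: cycle_cw_IR_def)
    then show ?thesis using change[OF k(1)] unfolding k(2) R_def additive_pref_def by linarith
  qed (simp add: mu'_def apply_cycle_outside R_def additive_pref_def)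
  obtain k where k: "k < length C" "cycle_receives C k \<in> A (cycle_agent C k)"
      "cycle_gives C k \<notin> A (cycle_agent C k)"
    using improving by blast
  then have "t (cycle_agent C k) (cycle_gives C k) < t (cycle_agent C k) (cycle_receives C k)"
    using k(2,3) unfolding t_def by (simp add: tier_less_tier)
  then have "strict (R (cycle_agent C k)) (mu' (cycle_agent C k)) (mu (cycle_agent C k))"
    using change[OF k(1)] unfolding strict_def R_def additive_pref_def by linarith
  then have "pareto_improves I R mu' mu"
    using weak is_cycle_agent_in[OF C(1) k(1)] unfolding pareto_improves_def by blast
  moreover have "matching I Obj Om mu'" unfolding mu'_def using matching_apply_cycle[OF mu C(1) len] .
  moreover have "preference_on (consumption Obj (card (Om i))) (R i)
      \<and> responsive Obj (consumption Obj (card (Om i))) (R i) (induced A B i)" for i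
    unfolding R_def t_def induced_eq
    using preference_on_additive_pref responsive_additive_pref[OF fin_Obj] by blast
  ultimately show ?thesis unfolding unambiguously_efficient_def pareto_efficient_def by blast
qed

definition dominates :: "('x \<Rightarrow> nat) \<Rightarrow> 'x set \<Rightarrow> 'x set \<Rightarrow> bool" where
  "dominates t Y X \<longleftrightarrow> (\<forall>s. card (X \<inter> {z. s \<le> t z}) \<le> card (Y \<inter> {z. s \<le> t z}))"

lemma ex_least_nat_on: "S \<noteq> {} \<Longrightarrow> \<exists>x\<in>S. \<forall>z\<in>S. (f x :: nat) \<le> f z"
  using ex_has_least_nat[of "\<lambda>z. z \<in> S" _ f] by blast

lemma card_Int_split:
  assumes "finite X"
  shows "card (X \<inter> U) = card (X \<inter> Y \<inter> U) + card ((X - Y) \<inter> U)"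
proof -
  have "X \<inter> U \<inter> Y = X \<inter> Y \<inter> U" "X \<inter> U - Y = (X - Y) \<inter> U" by auto
  then show ?thesis using card_Int_Diff[of "X \<inter> U" Y] assms by simp
qed

lemma card_Diff_sym: "finite X \<Longrightarrow> finite Y \<Longrightarrow> card X = card Y \<Longrightarrow> card (X - Y) = card (Y - X)"
  by (simp add: card_Diff_subset_Int Int_commute)

lemma dominates_least_le:
  assumes fin: "finite X" "finite Y" and card: "card X = card Y" and dom: "dominates t Y X"
    and x: "x \<in> X - Y" "\<forall>z\<in>X - Y. t x \<le> t z" and y: "y \<in> Y - X" "\<forall>z\<in>Y - X. t y \<le> t z"
  shows "t x \<le> t y"
proof (rule ccontr)
  assume less: "\<not> t x \<le> t y"
  let ?U = "{z. t x \<le> t z}"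
  have "card ((Y - X) \<inter> ?U) \<le> card ((Y - X) - {y})"
    using y less fin by (intro card_mono) auto
  also have "\<dots> < card (Y - X)" using y(1) fin by (meson card_Diff1_less finite_Diff)
  also have "\<dots> = card ((X - Y) \<inter> ?U)" using x(2) card_Diff_sym[OF fin card] by (simp add: Int_absorb2 subset_iff)
  finally have "card (Y \<inter> ?U) < card (X \<inter> ?U)"
    using card_Int_split[OF fin(1), of ?U Y] card_Int_split[OF fin(2), of ?U X] by (simp add: Int_commute)
  then show False using dom unfolding dominates_def by (meson not_le)
qed

lemma dominates_exchange:
  assumes fin: "finite X" "finite Y" and card: "card X = card Y" and dom: "dominates t Y X"
    and x: "x \<in> X - Y" and y: "y \<in> Y - X" "\<forall>z\<in>Y - X. t y \<le> t z" and le: "t x \<le> t y"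
  shows "dominates t Y (insert y (X - {x}))"
  unfolding dominates_def
proof
  fix s
  let ?U = "{z. s \<le> t z}"
  have change: "card (insert y (X - {x}) \<inter> ?U) + of_bool (x \<in> ?U) = card (X \<inter> ?U) + of_bool (y \<in> ?U)"
    using card_Int_exchange[OF fin(1)] x y by blast
  show "card (insert y (X - {x}) \<inter> ?U) \<le> card (Y \<inter> ?U)"
  proof (cases "t x < s \<and> s \<le> t y")
    case True
    have "x \<notin> ?U" using True by simp
    then have "(X - Y) \<inter> ?U \<subset> X - Y" using x by blast
    then have "card ((X - Y) \<inter> ?U) < card (X - Y)" using fin by (simp add: psubset_card_mono)
    moreover have "(Y - X) \<inter> ?U = Y - X" using y(2) True by (auto intro: le_trans)
    ultimately show ?thesis
      using change True card_Int_split[OF fin(1), of ?U Y] card_Int_split[OF fin(2), of ?U X]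
        card_Diff_sym[OF fin card] by (simp add: Int_commute)
  next
    case False
    then have "card (insert y (X - {x}) \<inter> ?U) \<le> card (X \<inter> ?U)"
      using change le by (cases "s \<le> t x") auto
    then show ?thesis using dom unfolding dominates_def by (meson le_trans)
  qed
qed

text \<open>Responsive preferences respect first-order stochastic dominance; the proof walks from
  \<open>X\<close> to \<open>Y\<close> by single exchanges, each weakly improving by responsiveness.\<close>

theorem responsive_dominance:
  assumes pref: "preference_on (consumption Obj k) R"
    and resp: "responsive Obj (consumption Obj k) R (\<lambda>x y. t y \<le> t x)" and fin: "finite Obj"
    and X: "X \<in> consumption Obj k" and Y: "Y \<in> consumption Obj k" and dom: "dominates t Y X"
  shows "R Y X \<and> ((\<exists>s. card (X \<inter> {z. s \<le> t z}) < card (Y \<inter> {z. s \<le> t z})) \<longrightarrow> \<not> R X Y)"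
  using X dom
proof (induction "card (X - Y)" arbitrary: X)
  case 0
  have "finite X" "finite Y" using "0.prems"(1) Y consumption_finite[OF fin] by blast+
  moreover have "card X = card Y" using "0.prems"(1) Y unfolding consumption_def by simp
  ultimately have "X = Y" using "0.hyps" by (metis card_0_eq card_subset_eq finite_Diff Diff_eq_empty_iff)
  then show ?case using pref Y unfolding preference_on_def by auto
next
  case (Suc n)
  let ?Xs = "consumption Obj k"
  have fX: "finite X" "finite Y" using Suc.prems(1) Y consumption_finite[OF fin] by blast+
  have card: "card X = card Y" and sub: "X \<subseteq> Obj" "Y \<subseteq> Obj"
    using Suc.prems(1) Y unfolding consumption_def by auto
  have "card (X - Y) = Suc n" "card (Y - X) = Suc n"
    using Suc.hyps(2) card_Diff_sym[OF fX card] by simp_all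
  then have "X - Y \<noteq> {}" "Y - X \<noteq> {}" by (metis card.empty nat.distinct(1))+
  then obtain x y where x: "x \<in> X - Y" "\<forall>z\<in>X - Y. t x \<le> t z" and y: "y \<in> Y - X" "\<forall>z\<in>Y - X. t y \<le> t z"
    using ex_least_nat_on[of "X - Y" t] ex_least_nat_on[of "Y - X" t] by blast
  have le: "t x \<le> t y" using dominates_least_le[OF fX card Suc.prems(2) x y] .
  define X' where "X' = insert y (X - {x})"
  have X': "X' \<in> ?Xs"
    using Suc.prems(1) x y sub card_exchange[of x X y] unfolding X'_def consumption_def by auto
  have "card (X' - Y) = n"
    using Suc.hyps(2) x y fX unfolding X'_def by (simp add: Diff_insert0 Diff_insert2[symmetric] insert_Diff_if)
  then have IH: "R Y X' \<and> ((\<exists>s. card (X' \<inter> {z. s \<le> t z}) < card (Y \<inter> {z. s \<le> t z})) \<longrightarrow> \<not> R X' Y)"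
    using Suc.hyps(1) X' dominates_exchange[OF fX card Suc.prems(2) x(1) y le] unfolding X'_def by blast
  have "y \<in> X'" "x \<notin> X'" "insert x (X' - {y}) = X" using x y unfolding X'_def by auto
  then have R_X'_X: "R X' X \<longleftrightarrow> t x \<le> t y" using responsiveD[OF resp, of y x X'] x y sub X' by auto
  have R_X_X': "R X X' \<longleftrightarrow> t y \<le> t x"
    using responsiveD[OF resp, of x y X] x y sub Suc.prems(1) unfolding X'_def by auto
  note trans = preference_on_trans[OF pref]
  have "R Y X" using trans[OF Y X' Suc.prems(1)] IH R_X'_X le by blast
  moreover have "\<not> R X Y" if strict: "\<exists>s. card (X \<inter> {z. s \<le> t z}) < card (Y \<inter> {z. s \<le> t z})"
  proof (cases "t x < t y")
    case True
    then show ?thesis using trans[OF Suc.prems(1) Y X'] IH R_X_X' by auto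
  next
    case False
    then have "card (X' \<inter> {z. s \<le> t z}) = card (X \<inter> {z. s \<le> t z})" for s
      using card_Int_exchange[OF fX(1), of x y "{z. s \<le> t z}"] x y le unfolding X'_def by simp
    then show ?thesis using trans[OF X' Suc.prems(1) Y] IH strict R_X'_X le by auto
  qed
  ultimately show ?case by blast
qed

lemma Int_upper_tier:
  "X \<inter> {z. s \<le> tier Ai Bi z} =
    (if s = 0 then X else if s = 1 then X \<inter> (Ai \<union> Bi) else if s = 2 then X \<inter> Ai else {})"
  unfolding tier_def by auto

lemma dominates_tier_iff:
  "dominates (tier Ai Bi) Y X \<longleftrightarrow>
    card X \<le> card Y \<and> card (X \<inter> (Ai \<union> Bi)) \<le> card (Y \<inter> (Ai \<union> Bi)) \<and> card (X \<inter> Ai) \<le> card (Y \<inter> Ai)"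
  unfolding dominates_def
proof (intro iffI allI)
  assume dom: "\<forall>s. card (X \<inter> {z. s \<le> tier Ai Bi z}) \<le> card (Y \<inter> {z. s \<le> tier Ai Bi z})"
  show "card X \<le> card Y \<and> card (X \<inter> (Ai \<union> Bi)) \<le> card (Y \<inter> (Ai \<union> Bi)) \<and> card (X \<inter> Ai) \<le> card (Y \<inter> Ai)"
    using dom[rule_format, of 0] dom[rule_format, of 1] dom[rule_format, of 2] by (simp add: Int_upper_tier)
qed (simp add: Int_upper_tier)

lemma strictly_dominates_tier_iff:
  "(\<exists>s. card (X \<inter> {z. s \<le> tier Ai Bi z}) < card (Y \<inter> {z. s \<le> tier Ai Bi z})) \<longleftrightarrow>
    card X < card Y \<or> card (X \<inter> (Ai \<union> Bi)) < card (Y \<inter> (Ai \<union> Bi)) \<or> card (X \<inter> Ai) < card (Y \<inter> Ai)"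
proof
  assume "\<exists>s. card (X \<inter> {z. s \<le> tier Ai Bi z}) < card (Y \<inter> {z. s \<le> tier Ai Bi z})"
  then show "card X < card Y \<or> card (X \<inter> (Ai \<union> Bi)) < card (Y \<inter> (Ai \<union> Bi)) \<or> card (X \<inter> Ai) < card (Y \<inter> Ai)"
    by (auto simp: Int_upper_tier split: if_splits)
next
  assume "card X < card Y \<or> card (X \<inter> (Ai \<union> Bi)) < card (Y \<inter> (Ai \<union> Bi)) \<or> card (X \<inter> Ai) < card (Y \<inter> Ai)"
  then show "\<exists>s. card (X \<inter> {z. s \<le> tier Ai Bi z}) < card (Y \<inter> {z. s \<le> tier Ai Bi z})"
    by (elim disjE) (intro exI[of _ 0] exI[of _ 1] exI[of _ 2], simp add: Int_upper_tier)+
qed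

lemma responsive_tier_improvement:
  assumes pref: "preference_on (consumption Obj k) R"
    and resp: "responsive Obj (consumption Obj k) R (induced A B i)" and fin: "finite Obj"
    and X: "X \<in> consumption Obj k" and Y: "Y \<in> consumption Obj k"
    and acc: "X \<subseteq> A i \<union> B i" and R: "R Y X"
  shows "card (X \<inter> A i) \<le> card (Y \<inter> A i)"
    and "card (X \<inter> A i) = card (Y \<inter> A i) \<Longrightarrow> Y \<subseteq> A i \<union> B i"
    and "\<not> R X Y \<Longrightarrow> card (X \<inter> A i) < card (Y \<inter> A i)"
proof -
  note dominance = responsive_dominance[OF pref resp[unfolded induced_eq] fin]
  have fY: "finite Y" using consumption_finite[OF fin Y] .
  have card: "card X = card Y" using X Y unfolding consumption_def by simp
  have X_acc: "card (X \<inter> (A i \<union> B i)) = card X" using acc by (simp add: Int_absorb2)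
  have Y_acc: "card (Y \<inter> (A i \<union> B i)) \<le> card Y" using fY by (simp add: card_mono)
  have Y_acc_less: "card (Y \<inter> (A i \<union> B i)) < card Y" if "\<not> Y \<subseteq> A i \<union> B i"
    using that fY by (intro psubset_card_mono) auto
  have main: "card (X \<inter> A i) \<le> card (Y \<inter> A i) \<and> (card (X \<inter> A i) = card (Y \<inter> A i) \<longrightarrow> Y \<subseteq> A i \<union> B i)"
  proof (rule ccontr)
    assume "\<not> ?thesis"
    then have "dominates (tier (A i) (B i)) X Y"
      and "card (Y \<inter> (A i \<union> B i)) < card (X \<inter> (A i \<union> B i)) \<or> card (Y \<inter> A i) < card (X \<inter> A i)"
      using card X_acc Y_acc Y_acc_less unfolding dominates_tier_iff by auto
    then have "\<not> R Y X" using dominance[OF Y X] strictly_dominates_tier_iff by blast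
    then show False using R by blast
  qed
  then show "card (X \<inter> A i) \<le> card (Y \<inter> A i)" "card (X \<inter> A i) = card (Y \<inter> A i) \<Longrightarrow> Y \<subseteq> A i \<union> B i"
    by blast+
  show "card (X \<inter> A i) < card (Y \<inter> A i)" if "\<not> R X Y"
  proof (rule ccontr)
    assume "\<not> ?thesis"
    with main have "card (X \<inter> A i) = card (Y \<inter> A i)" "Y \<subseteq> A i \<union> B i" by auto
    then have "dominates (tier (A i) (B i)) X Y"
      using card X_acc unfolding dominates_tier_iff by (simp add: Int_absorb2)
    then show False using dominance[OF Y X] that by blast
  qed
qed

lemma cw_IR_imp_acceptable:
  assumes econ: "economy I Obj Om" and AB: "AB_profile I Obj Om A B"
    and mu: "matching I Obj Om mu" and IR: "cw_IR I Om (induced A B) mu" and i: "i \<in> I"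
  shows "mu i \<subseteq> A i \<union> B i"
proof -
  have fin: "finite (mu i)" using econ mu i unfolding economy_def matching_def by (meson finite_subset)
  obtain w where w: "w \<in> Om i" "\<forall>z\<in>Om i. tier (A i) (B i) w \<le> tier (A i) (B i) z"
    using econ i ex_least_nat_on[of "Om i" "tier (A i) (B i)"] unfolding economy_def by blast
  have "{x\<in>Om i. induced A B i x w} = Om i" using w(2) unfolding induced_def by auto
  then have "card (mu i) \<le> card {x\<in>mu i. induced A B i x w}"
    using IR i w(1) mu unfolding cw_IR_def matching_def by force
  then have "{x\<in>mu i. induced A B i x w} = mu i" using fin by (intro card_seteq) auto
  moreover have "1 \<le> tier (A i) (B i) w" using AB i w(1) unfolding AB_profile_def tier_def by auto
  ultimately have "\<forall>x\<in>mu i. 1 \<le> tier (A i) (B i) x" unfolding induced_def by force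
  then show ?thesis unfolding tier_def by (auto split: if_splits)
qed

lemma card_eq_sum_Int:
  assumes "finite I" "finite S" "S \<subseteq> (\<Union>i\<in>I. X i)" "disjoint_family_on X I"
  shows "card S = (\<Sum>i\<in>I. card (S \<inter> X i))"
proof -
  have "S = (\<Union>i\<in>I. S \<inter> X i)" using assms(3) by blast
  moreover have "disjoint_family_on (\<lambda>i. S \<inter> X i) I"
    using assms(4) unfolding disjoint_family_on_def by blast
  ultimately show ?thesis using card_UN_disjoint' assms(1,2) by (metis finite_Int)
qed

definition owner :: "'i set \<Rightarrow> ('i \<Rightarrow> 'x set) \<Rightarrow> 'x \<Rightarrow> 'i" where
  "owner I mu x = (THE i. i \<in> I \<and> x \<in> mu i)"

lemma owner_eq: "disjoint_family_on mu I \<Longrightarrow> i \<in> I \<Longrightarrow> x \<in> mu i \<Longrightarrow> owner I mu x = i"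
  unfolding owner_def disjoint_family_on_def by (rule the_equality) blast+

lemma owner_mem:
  "disjoint_family_on mu I \<Longrightarrow> x \<in> (\<Union>i\<in>I. mu i) \<Longrightarrow> owner I mu x \<in> I \<and> x \<in> mu (owner I mu x)"
  using owner_eq by fastforce

locale pareto_reallocation =
  fixes I :: "'i set" and Obj :: "'x set" and mu mu' A B :: "'i \<Rightarrow> 'x set"
  assumes finite_agents: "finite I" and finite_objects: "finite Obj"
    and disjoint: "disjoint_family_on mu I" and disjoint': "disjoint_family_on mu' I"
    and subset': "\<And>i. i \<in> I \<Longrightarrow> mu' i \<subseteq> Obj"
    and covers: "(\<Union>i\<in>I. mu i) = Obj"
    and card_eq: "\<And>i. i \<in> I \<Longrightarrow> card (mu' i) = card (mu i)"
    and no_loss: "\<And>i. i \<in> I \<Longrightarrow> card (mu i \<inter> A i) \<le> card (mu' i \<inter> A i)"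
    and acceptable_if_no_gain:
      "\<And>i. i \<in> I \<Longrightarrow> card (mu i \<inter> A i) = card (mu' i \<inter> A i) \<Longrightarrow> mu' i \<subseteq> A i \<union> B i"
    and some_gain: "\<exists>i\<in>I. card (mu i \<inter> A i) < card (mu' i \<inter> A i)"
begin

definition gives :: "'i \<Rightarrow> 'x set" where
  "gives i = mu i - mu' i"

definition gets :: "'i \<Rightarrow> 'x set" where
  "gets i = mu' i - mu i"

definition gains :: "'i \<Rightarrow> bool" where
  "gains i \<longleftrightarrow> card (mu i \<inter> A i) < card (mu' i \<inter> A i)"

definition exchange :: "('x \<times> 'x) set" where
  "exchange = {(g, r). \<exists>i\<in>I. g \<in> gives i \<and> r \<in> gets i \<and> r \<in> A i \<union> B i \<and> (g \<in> A i \<longrightarrow> r \<in> A i)}"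

definition improving_exchange :: "('x \<times> 'x) set" where
  "improving_exchange =
     {(g, r). \<exists>i\<in>I. gains i \<and> g \<in> gives i \<and> r \<in> gets i \<and> r \<in> A i \<and> g \<notin> A i}"

lemma finite_mu: "i \<in> I \<Longrightarrow> finite (mu i)"
  using covers finite_objects by (meson UN_upper finite_subset)

lemma finite_mu': "i \<in> I \<Longrightarrow> finite (mu' i)"
  using subset' finite_objects by (meson finite_subset)

lemma card_gets: "i \<in> I \<Longrightarrow> card (gets i) = card (gives i)"
  unfolding gets_def gives_def using card_Diff_sym[OF finite_mu' finite_mu card_eq] .

lemma card_gives_Int_A:
  assumes "i \<in> I"
  shows "card (gives i \<inter> A i) \<le> card (gets i \<inter> A i)"
    and "gains i \<Longrightarrow> card (gives i \<inter> A i) < card (gets i \<inter> A i)"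
  using no_loss[OF assms] card_Int_split[OF finite_mu[OF assms], of "A i" "mu' i"]
    card_Int_split[OF finite_mu'[OF assms], of "A i" "mu i"]
  unfolding gives_def gets_def gains_def by (simp_all add: Int_commute)

lemma gets_subset_gives: "(\<Union>i\<in>I. gets i) \<subseteq> (\<Union>i\<in>I. gives i)"
proof
  fix x assume "x \<in> (\<Union>i\<in>I. gets i)"
  then obtain i where i: "i \<in> I" "x \<in> mu' i" "x \<notin> mu i" unfolding gets_def by blast
  then obtain j where j: "j \<in> I" "x \<in> mu j" using subset' covers by blast
  then have "i \<noteq> j" using i by blast
  then have "x \<notin> mu' j" using i j disjoint' unfolding disjoint_family_on_def by blast
  then show "x \<in> (\<Union>i\<in>I. gives i)" using j unfolding gives_def by blast
qed

lemma improving_exchange_subset: "improving_exchange \<subseteq> exchange"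
  unfolding improving_exchange_def exchange_def by blast

lemma Range_exchange: "Range exchange \<subseteq> (\<Union>i\<in>I. gets i)"
  unfolding exchange_def by blast

lemma finite_Union_gets: "finite (\<Union>i\<in>I. gets i)"
  using finite_agents finite_mu' unfolding gets_def by blast

lemma closed_set_count:
  assumes closed: "exchange `` S \<subseteq> S"
    and no_tail: "\<And>i. i \<in> I \<Longrightarrow> gains i \<Longrightarrow> S \<inter> gives i \<subseteq> A i"
    and fin: "finite S" and i: "i \<in> I"
  shows "card (S \<inter> gives i) \<le> card (S \<inter> gets i) \<and>
    (gains i \<and> S \<inter> gets i \<noteq> {} \<longrightarrow> card (S \<inter> gives i) < card (S \<inter> gets i))"
proof (cases "S \<inter> gives i \<subseteq> A i")
  case False
  then obtain g where g: "g \<in> S" "g \<in> gives i" "g \<notin> A i" by blast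
  then have no_gain: "\<not> gains i" using no_tail i by blast
  then have "mu' i \<subseteq> A i \<union> B i"
    using acceptable_if_no_gain no_loss i unfolding gains_def by (meson le_neq_implies_less)
  then have "gets i \<subseteq> S" using closed g i unfolding exchange_def gets_def by blast
  then have "card (S \<inter> gets i) = card (gives i)" using card_gets i by (simp add: Int_absorb1)
  moreover have "card (S \<inter> gives i) \<le> card (gives i)"
    using finite_mu[OF i] unfolding gives_def by (simp add: card_mono)
  ultimately show ?thesis using no_gain by simp
next
  case no_tail_i: True
  show ?thesis
  proof (cases "S \<inter> gives i = {}")
    case True
    then show ?thesis using fin by (auto simp: card_gt_0_iff)
  next
    case False
    then obtain g where "g \<in> S" "g \<in> gives i" "g \<in> A i" using no_tail_i by blast
    then have "gets i \<inter> A i \<subseteq> S" using closed i unfolding exchange_def by blast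
    then have "card (gets i \<inter> A i) \<le> card (S \<inter> gets i)" using fin by (intro card_mono) auto
    moreover have "card (S \<inter> gives i) \<le> card (gives i \<inter> A i)"
      using no_tail_i finite_mu[OF i] unfolding gives_def by (intro card_mono) auto
    ultimately show ?thesis using card_gives_Int_A[OF i] by linarith
  qed
qed

lemma no_closed_set:
  assumes S: "S \<subseteq> (\<Union>i\<in>I. gets i)"
    and closed: "exchange `` S \<subseteq> S"
    and no_tail: "\<And>i. i \<in> I \<Longrightarrow> gains i \<Longrightarrow> S \<inter> gives i \<subseteq> A i"
    and j: "j \<in> I" "gains j" "S \<inter> gets j \<noteq> {}"
  shows False
proof -
  have fin: "finite S" using S finite_Union_gets by (rule finite_subset)
  have "card S = (\<Sum>i\<in>I. card (S \<inter> gets i))"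
    using card_eq_sum_Int[OF finite_agents fin S] disjoint' unfolding gets_def disjoint_family_on_def by blast
  moreover have "card S = (\<Sum>i\<in>I. card (S \<inter> gives i))"
    using card_eq_sum_Int[OF finite_agents fin] S gets_subset_gives disjoint
    unfolding gives_def disjoint_family_on_def by blast
  moreover have "(\<Sum>i\<in>I. card (S \<inter> gives i)) < (\<Sum>i\<in>I. card (S \<inter> gets i))"
  proof (rule sum_strict_mono_ex1[OF finite_agents])
    show "\<forall>i\<in>I. card (S \<inter> gives i) \<le> card (S \<inter> gets i)"
      using closed_set_count[OF closed no_tail fin] by blast
    show "\<exists>i\<in>I. card (S \<inter> gives i) < card (S \<inter> gets i)"
      using closed_set_count[OF closed no_tail fin j(1)] j by blast
  qed
  ultimately show False by simp
qed

lemma gains_gets_A: "i \<in> I \<Longrightarrow> gains i \<Longrightarrow> gets i \<inter> A i \<noteq> {}"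
  using card_gives_Int_A(2) by fastforce

lemma gains_gives_not_A:
  assumes "i \<in> I" "gains i"
  shows "gives i - A i \<noteq> {}"
proof
  assume "gives i - A i = {}"
  then have "card (gives i \<inter> A i) = card (gets i)" using card_gets[OF assms(1)] by (simp add: Int_absorb2)
  moreover have "card (gets i \<inter> A i) \<le> card (gets i)"
    using finite_mu'[OF assms(1)] unfolding gets_def by (simp add: card_mono)
  ultimately show False using card_gives_Int_A(2)[OF assms] by simp
qed

text \<open>Were no improving exchange on a cycle, the objects reachable from the head of an
  improving exchange reaching the fewest objects would form a closed set without improving tails.\<close>

lemma improving_exchange_on_cycle: "\<exists>(g, r)\<in>improving_exchange. (r, g) \<in> exchange\<^sup>*"
proof (rule ccontr)
  assume none: "\<not> ?thesis"
  define reach where "reach r = exchange\<^sup>* `` {r}" for r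
  have reach_sub: "reach r \<subseteq> insert r (\<Union>i\<in>I. gets i)" for r
  proof
    fix x assume "x \<in> reach r"
    then have "(r, x) \<in> exchange\<^sup>*" unfolding reach_def by simp
    then show "x \<in> insert r (\<Union>i\<in>I. gets i)" by (rule rtranclE) (use Range_exchange in auto)
  qed
  then have fin_reach: "finite (reach r)" for r
    using finite_Union_gets by (meson finite_insert finite_subset)
  obtain i0 where "i0 \<in> I" "gains i0" using some_gain unfolding gains_def by blast
  then have "improving_exchange \<noteq> {}"
    using gains_gets_A gains_gives_not_A unfolding improving_exchange_def by blast
  then obtain gs rs where min: "(gs, rs) \<in> improving_exchange"
    "\<And>g r. (g, r) \<in> improving_exchange \<Longrightarrow> card (reach rs) \<le> card (reach r)"
    using ex_has_least_nat[of "\<lambda>e. e \<in> improving_exchange" _ "\<lambda>e. card (reach (snd e))"] by force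
  then obtain js where js: "js \<in> I" "gains js" "rs \<in> gets js"
    unfolding improving_exchange_def by blast
  have closed: "exchange `` reach rs \<subseteq> reach rs"
    unfolding reach_def by (auto intro: rtrancl_into_rtrancl)
  have no_tail: "reach rs \<inter> gives i \<subseteq> A i" if i: "i \<in> I" "gains i" for i
  proof
    fix g assume g: "g \<in> reach rs \<inter> gives i"
    show "g \<in> A i"
    proof (rule ccontr)
      assume "g \<notin> A i"
      then obtain r where r: "(g, r) \<in> improving_exchange"
        using gains_gets_A[OF i] g i unfolding improving_exchange_def by blast
      have "reach r \<subseteq> reach rs"
        using g improving_exchange_subset r unfolding reach_def by (force intro: rtrancl_trans)
      then have "reach r = reach rs" using min(2)[OF r] fin_reach by (meson card_seteq)
      then have "(r, g) \<in> exchange\<^sup>*"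
        using g unfolding reach_def by (metis Image_singleton_iff IntD1 rtrancl.rtrancl_refl rtrancl_trans)
      then show False using none r by blast
    qed
  qed
  show False
  proof (rule no_closed_set[OF _ closed no_tail js(1,2)])
    show "reach rs \<subseteq> (\<Union>i\<in>I. gets i)" using reach_sub js by blast
    show "reach rs \<inter> gets js \<noteq> {}" using js(3) unfolding reach_def by blast
  qed
qed

lemma Union_gets_subset: "(\<Union>i\<in>I. gets i) \<subseteq> Obj"
  using subset' unfolding gets_def by blast

lemma exchange_acceptable: "e \<in> exchange \<Longrightarrow> acceptable_swap A B (owner I mu) e"
  unfolding exchange_def acceptable_swap_def gives_def using owner_eq[OF disjoint] by fastforce

lemma improving_exchange_improving: "e \<in> improving_exchange \<Longrightarrow> improving_swap A (owner I mu) e"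
  unfolding improving_exchange_def improving_swap_def gives_def using owner_eq[OF disjoint] by fastforce

lemma improving_closed_walk_exists: "\<exists>xs. set xs \<subseteq> Obj \<and> improving_closed_walk A B (owner I mu) xs"
proof -
  obtain g r where gr: "(g, r) \<in> improving_exchange" "(r, g) \<in> exchange\<^sup>*"
    using improving_exchange_on_cycle by blast
  obtain xs where xs: "xs \<noteq> []" "hd xs = r" "last xs = g" "path_edges xs \<subseteq> exchange"
      "set xs \<subseteq> insert r (Range exchange)"
    using rtrancl_imp_path[OF gr(2)] by blast
  have "cycle_edges xs = insert (g, r) (path_edges xs)"
    using cycle_edges_eq_path_edges[OF xs(1)] xs(2,3) by simp
  moreover have "(g, r) \<in> exchange" using gr(1) improving_exchange_subset by blast
  ultimately have "cycle_edges xs \<subseteq> exchange" using xs(4) by simp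
  then have "\<forall>e\<in>cycle_edges xs. acceptable_swap A B (owner I mu) e" using exchange_acceptable by blast
  moreover have "improving_swap A (owner I mu) (g, r)" using improving_exchange_improving gr(1) .
  ultimately have "improving_closed_walk A B (owner I mu) xs"
    unfolding improving_closed_walk_def improving_swaps_def
    using xs(1) \<open>cycle_edges xs = insert (g, r) (path_edges xs)\<close> by blast
  moreover have "set xs \<subseteq> Obj"
    using xs(5) gr(1) Range_exchange Union_gets_subset unfolding improving_exchange_def by blast
  ultimately show ?thesis by blast
qed

end

lemma is_cycle_of_walk:
  fixes I :: "'i set" and mu :: "'i \<Rightarrow> 'x set"
  defines "own \<equiv> owner I mu"
  assumes disj: "disjoint_family_on mu I" and owned: "set xs \<subseteq> (\<Union>i\<in>I. mu i)"
    and dist: "distinct (map own xs)" and len: "2 \<le> length xs"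
  shows "is_cycle I mu (zip (map own xs) (rotate1 xs))"
proof -
  let ?C = "zip (map own xs) (rotate1 xs)"
  have nth: "?C ! k = (own (xs ! k), xs ! (Suc k mod length xs))" if "k < length xs" for k
    using that by (simp add: nth_rotate1)
  have own: "own (xs ! k) \<in> I \<and> xs ! k \<in> mu (own (xs ! k))" if "k < length xs" for k
    using owner_mem[OF disj] owned that unfolding own_def by (meson nth_mem subsetD)
  have "xs ! (Suc k mod length xs) \<notin> mu (own (xs ! k))" if k: "k < length xs" for k
  proof -
    have "Suc k mod length xs < length xs" "Suc k mod length xs \<noteq> k"
      using k len by (auto simp: mod_Suc)
    then have "own (xs ! (Suc k mod length xs)) \<noteq> own (xs ! k)"
      using dist k by (simp add: nth_eq_iff_index_eq distinct_conv_nth)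
    then show ?thesis using own k \<open>Suc k mod length xs < length xs\<close> disj
      unfolding disjoint_family_on_def by blast
  qed
  moreover have "distinct xs" using dist by (simp add: distinct_map)
  moreover have "Suc (length xs - 1) = length xs" using len by arith
  moreover have "0 < length xs" using len by linarith
  then have "fst (?C ! 0) = own (xs ! 0)" "xs ! 0 \<in> mu (own (xs ! 0))" using own nth by auto
  ultimately show ?thesis
    unfolding is_cycle_def using len own nth dist by (auto simp: map_fst_zip map_snd_zip)
qed

lemma improving_walk_imp_improving_cycle:
  fixes I :: "'i set" and mu :: "'i \<Rightarrow> 'x set"
  defines "own \<equiv> owner I mu"
  assumes disj: "disjoint_family_on mu I" and fin: "\<forall>i\<in>I. finite (mu i)"
    and owned: "set xs \<subseteq> (\<Union>i\<in>I. mu i)"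
    and walk: "improving_closed_walk A B own xs" and dist: "distinct (map own xs)"
  shows "\<exists>C. is_cycle I mu C \<and> cycle_cw_IR A B C \<and> cycle_pareto_improving I A mu C"
proof -
  define C where "C = zip (map own xs) (rotate1 xs)"
  have len_C: "length C = length xs" unfolding C_def by simp
  have at: "cycle_agent C k = own (xs ! k) \<and> cycle_gives C k = xs ! k
      \<and> cycle_receives C k = xs ! (Suc k mod length xs)" if "k < length xs" for k
    using that cyc_prev_less[OF that] Suc_mod_eq_iff_cyc_prev[OF cyc_prev_less[OF that] that]
    unfolding C_def by (simp add: nth_rotate1)
  have edges: "cycle_edges xs = (\<lambda>k. (cycle_gives C k, cycle_receives C k)) ` {..<length C}"
    unfolding cycle_edges_conv_nth
  proof (rule image_cong)
    show "{..<length xs} = {..<length C}" by (simp add: len_C)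
    show "(xs ! k, xs ! (Suc k mod length xs)) = (cycle_gives C k, cycle_receives C k)"
      if "k \<in> {..<length C}" for k
    proof -
      have "k < length xs" using that len_C by simp
      then show ?thesis using at by simp
    qed
  qed
  have len: "2 \<le> length xs"
  proof (rule ccontr)
    assume "\<not> 2 \<le> length xs"
    moreover have "0 < length xs" using walk unfolding improving_closed_walk_def by simp
    ultimately have "length xs = 1" by linarith
    then show False using walk unfolding improving_closed_walk_def improving_swaps_def
      cycle_edges_conv_nth improving_swap_def by auto
  qed
  have cyc: "is_cycle I mu C"
    unfolding C_def own_def by (rule is_cycle_of_walk[OF disj owned dist[unfolded own_def] len])
  have swaps: "improving_swaps A B own ((\<lambda>k. (cycle_gives C k, cycle_receives C k)) ` {..<length C})"
    using walk edges unfolding improving_closed_walk_def by simp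
  have "cycle_cw_IR A B C"
    using swaps at len_C unfolding cycle_cw_IR_def improving_swaps_def acceptable_swap_def by force
  moreover have "cycle_pareto_improving I A mu C"
    using cycle_pareto_improving_iff[OF cyc len[folded len_C] disj fin] swaps at len_C
    unfolding improving_swaps_def acceptable_swap_def improving_swap_def by force
  ultimately show ?thesis using cyc by blast
qed

lemma matching_covers:
  assumes econ: "economy I Obj Om" and mu: "matching I Obj Om mu"
  shows "(\<Union>i\<in>I. mu i) = Obj"
proof -
  have fin: "finite I" "finite Obj" using econ unfolding economy_def by auto
  have sub: "(\<Union>i\<in>I. mu i) \<subseteq> Obj" "\<forall>i\<in>I. Om i \<subseteq> Obj"
    using mu econ unfolding matching_def economy_def by auto
  have "card (\<Union>i\<in>I. mu i) = (\<Sum>i\<in>I. card (mu i))"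
    using card_UN_disjoint'[OF matching_disjoint_family[OF mu]] fin sub by (meson UN_subset_iff finite_subset)
  also have "\<dots> = (\<Sum>i\<in>I. card (Om i))" using mu unfolding matching_def by simp
  also have "\<dots> = card Obj"
    using card_UN_disjoint'[of Om I] econ fin sub unfolding economy_def disjoint_family_on_def
    by (metis finite_subset)
  finally show ?thesis using sub fin by (simp add: card_subset_eq)
qed

lemma pareto_improvement_reallocation:
  assumes econ: "economy I Obj Om" and AB: "AB_profile I Obj Om A B"
    and mu: "matching I Obj Om mu" and IR: "cw_IR I Om (induced A B) mu"
    and R: "\<forall>i\<in>I. preference_on (consumption Obj (card (Om i))) (R i)
              \<and> responsive Obj (consumption Obj (card (Om i))) (R i) (induced A B i)"
    and mu': "matching I Obj Om mu'" and improves: "pareto_improves I R mu' mu"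
  shows "pareto_reallocation I Obj mu mu' A B"
proof -
  have fin: "finite I" "finite Obj" using econ unfolding economy_def by auto
  have cons: "mu i \<in> consumption Obj (card (Om i))" "mu' i \<in> consumption Obj (card (Om i))"
    if "i \<in> I" for i
    using mu mu' that unfolding matching_def consumption_def by auto
  have agent: "card (mu i \<inter> A i) \<le> card (mu' i \<inter> A i)"
      "card (mu i \<inter> A i) = card (mu' i \<inter> A i) \<Longrightarrow> mu' i \<subseteq> A i \<union> B i"
      "\<not> R i (mu i) (mu' i) \<Longrightarrow> card (mu i \<inter> A i) < card (mu' i \<inter> A i)" if "i \<in> I" for i
  proof -
    have "preference_on (consumption Obj (card (Om i))) (R i)"
      "responsive Obj (consumption Obj (card (Om i))) (R i) (induced A B i)"
      using R that by blast+
    note tier = responsive_tier_improvement[OF this fin(2) cons[OF that]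
        cw_IR_imp_acceptable[OF econ AB mu IR that]]
    have "R i (mu' i) (mu i)" using improves that unfolding pareto_improves_def by blast
    then show "card (mu i \<inter> A i) \<le> card (mu' i \<inter> A i)"
      "card (mu i \<inter> A i) = card (mu' i \<inter> A i) \<Longrightarrow> mu' i \<subseteq> A i \<union> B i"
      "\<not> R i (mu i) (mu' i) \<Longrightarrow> card (mu i \<inter> A i) < card (mu' i \<inter> A i)"
      using tier by blast+
  qed
  show ?thesis
  proof
    show "finite I" "finite Obj" by (fact fin)+
    show "disjoint_family_on mu I" "disjoint_family_on mu' I"
      using matching_disjoint_family mu mu' by blast+
    show "mu' i \<subseteq> Obj" if "i \<in> I" for i using mu' that unfolding matching_def by blast
    show "(\<Union>i\<in>I. mu i) = Obj" using matching_covers[OF econ mu] .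
    show "card (mu' i) = card (mu i)" if "i \<in> I" for i using mu mu' that unfolding matching_def by simp
    show "card (mu i \<inter> A i) \<le> card (mu' i \<inter> A i)" if "i \<in> I" for i using agent(1)[OF that] .
    show "mu' i \<subseteq> A i \<union> B i" if "i \<in> I" "card (mu i \<inter> A i) = card (mu' i \<inter> A i)" for i
      using agent(2) that .
    show "\<exists>i\<in>I. card (mu i \<inter> A i) < card (mu' i \<inter> A i)"
      using improves agent(3) unfolding pareto_improves_def strict_def by blast
  qed
qed

theorem not_unambiguously_efficient_imp_improving_cycle:
  assumes econ: "economy I Obj Om" and AB: "AB_profile I Obj Om A B"
    and mu: "matching I Obj Om mu" and IR: "cw_IR I Om (induced A B) mu"
    and not_efficient: "\<not> unambiguously_efficient I Obj Om (induced A B) mu"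
  shows "\<exists>C. is_cycle I mu C \<and> cycle_cw_IR A B C \<and> cycle_pareto_improving I A mu C"
proof -
  obtain R mu' where "\<forall>i\<in>I. preference_on (consumption Obj (card (Om i))) (R i)
      \<and> responsive Obj (consumption Obj (card (Om i))) (R i) (induced A B i)"
    and "matching I Obj Om mu'" "pareto_improves I R mu' mu"
    using not_efficient unfolding unambiguously_efficient_def pareto_efficient_def by blast
  then interpret pareto_reallocation I Obj mu mu' A B
    using pareto_improvement_reallocation[OF econ AB mu IR] by blast
  obtain xs where "set xs \<subseteq> Obj" "improving_closed_walk A B (owner I mu) xs"
    using improving_closed_walk_exists by blast
  then obtain ys where "set ys \<subseteq> Obj" "improving_closed_walk A B (owner I mu) ys"
      "distinct (map (owner I mu) ys)"
    using improving_closed_walk_shortcut by blast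
  then show ?thesis using improving_walk_imp_improving_cycle[OF disjoint] finite_mu covers by blast
qed

theorem lemma2:
  fixes I :: "'i set" and Obj :: "'x set" and Om :: "'i \<Rightarrow> 'x set"
    and A B :: "'i \<Rightarrow> 'x set" and mu :: "'i \<Rightarrow> 'x set"
  assumes "economy I Obj Om"
    and "AB_profile I Obj Om A B"
    and "matching I Obj Om mu"
    and "cw_IR I Om (induced A B) mu"
  shows "unambiguously_efficient I Obj Om (induced A B) mu \<longleftrightarrow>
         \<not> (\<exists>C. is_cycle I mu C \<and> cycle_cw_IR A B C \<and> cycle_pareto_improving I A mu C)"
  using improving_cycle_not_unambiguously_efficient[OF assms(1,3)]
    not_unambiguously_efficient_imp_improving_cycle[OF assms] by blast

end
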